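(* Let $\Pi=(P,\mathcal{L})$ be an $n$-dimensional projective space and $\Pi'=(P',\mathcal{L}')$ an $n$-dimensional linear space satisfying the exchange axiom, and let $f$ be a strong embedding of $\Pi$ to $\Pi'$. If for some $k\in\{0,\dots,n-1\}$ the mapping $G_{k}(f):\mathcal{G}_k(\Pi)\to\mathcal{G}_k(\Pi')$, $S\mapsto\overline{f(S)}$, is bijective, then $f$ is a collineation.
   Context: A linear space $\Pi=(P,\mathcal{L})$ is a set $P$ of points with a family $\mathcal{L}$ of proper subsets (lines) such that each line has at least two points and any two distinct points $p,q$ lie on exactly one line $pq$. Points are collinear if some line contains them. A subspace is a set $S\subset P$ with $pq\subset S$ for all distinct $p,q\in S$; $\overline{X}$ is the smallest subspace containing $X$. A set $X$ is independent if $\overline{X}$ is not spanned by a proper subset of $X$. A subspace is $m$-dimensional if $m+1$ is the smallest number of points spanning it. Exchange axiom: for every $X\subset P$ and $p_1,p_2\in P\setminus\overline{X}$, $p_2\in\overline{X\cup\{p_1\}}$ implies $p_1\in\overline{X\cup\{p_2\}}$. A projective space is a linear space in which every $2$-dimensional subspace is a projective plane (any two of its lines meet and each line has at least three points). $\mathcal{G}_k(\Pi)$ is the set of $k$-dimensional subspaces. A strong embedding is an injection $f:P\to P'$ sending collinear triples to collinear triples, non-collinear triples to non-collinear triples and independent sets to independent sets; then $\dim\overline{f(S)}=\dim S$ for every subspace $S$. A collineation is a bijection $f:P\to P'$ with $f(\mathcal{L})=\mathcal{L}'$. *)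

theory Defs
  imports Main
begin

definition linear_space :: "'a set \<Rightarrow> 'a set set \<Rightarrow> bool" where
  "linear_space P L \<longleftrightarrow>
     (\<forall>l\<in>L. l \<subseteq> P \<and> l \<noteq> P \<and> (\<exists>p q. p \<in> l \<and> q \<in> l \<and> p \<noteq> q)) \<and>
     (\<forall>p\<in>P. \<forall>q\<in>P. p \<noteq> q \<longrightarrow> (\<exists>!l. l \<in> L \<and> p \<in> l \<and> q \<in> l))"

definition line_through :: "'a set set \<Rightarrow> 'a \<Rightarrow> 'a \<Rightarrow> 'a set" where
  "line_through L p q = (THE l. l \<in> L \<and> p \<in> l \<and> q \<in> l)"

definition collinear_set :: "'a set set \<Rightarrow> 'a set \<Rightarrow> bool" where
  "collinear_set L X \<longleftrightarrow> (\<exists>l\<in>L. X \<subseteq> l)"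

definition subspace :: "'a set \<Rightarrow> 'a set set \<Rightarrow> 'a set \<Rightarrow> bool" where
  "subspace P L S \<longleftrightarrow> S \<subseteq> P \<and>
     (\<forall>p\<in>S. \<forall>q\<in>S. p \<noteq> q \<longrightarrow> line_through L p q \<subseteq> S)"

definition span :: "'a set \<Rightarrow> 'a set set \<Rightarrow> 'a set \<Rightarrow> 'a set" where
  "span P L X = \<Inter> {S. subspace P L S \<and> X \<subseteq> S}"

definition independent :: "'a set \<Rightarrow> 'a set set \<Rightarrow> 'a set \<Rightarrow> bool" where
  "independent P L X \<longleftrightarrow> X \<subseteq> P \<and> (\<forall>Y. Y \<subset> X \<longrightarrow> span P L Y \<noteq> span P L X)"

definition is_dim :: "'a set \<Rightarrow> 'a set set \<Rightarrow> 'a set \<Rightarrow> nat \<Rightarrow> bool" where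
  "is_dim P L S m \<longleftrightarrow> subspace P L S \<and>
     (\<exists>X. X \<subseteq> P \<and> finite X \<and> card X = m + 1 \<and> span P L X = S) \<and>
     (\<forall>X. X \<subseteq> P \<and> finite X \<and> span P L X = S \<longrightarrow> m + 1 \<le> card X)"

definition Grass :: "'a set \<Rightarrow> 'a set set \<Rightarrow> nat \<Rightarrow> 'a set set" where
  "Grass P L k = {S. is_dim P L S k}"

definition exchange_axiom :: "'a set \<Rightarrow> 'a set set \<Rightarrow> bool" where
  "exchange_axiom P L \<longleftrightarrow>
     (\<forall>X p1 p2. X \<subseteq> P \<and> p1 \<in> P - span P L X \<and> p2 \<in> P - span P L X \<and>
        p2 \<in> span P L (X \<union> {p1}) \<longrightarrow> p1 \<in> span P L (X \<union> {p2}))"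

definition projective_space :: "'a set \<Rightarrow> 'a set set \<Rightarrow> bool" where
  "projective_space P L \<longleftrightarrow> linear_space P L \<and>
     (\<forall>S. is_dim P L S 2 \<longrightarrow>
        (\<forall>l1\<in>L. \<forall>l2\<in>L. l1 \<subseteq> S \<and> l2 \<subseteq> S \<longrightarrow> l1 \<inter> l2 \<noteq> {}) \<and>
        (\<forall>l\<in>L. l \<subseteq> S \<longrightarrow> (\<exists>a b c. a \<in> l \<and> b \<in> l \<and> c \<in> l \<and> a \<noteq> b \<and> a \<noteq> c \<and> b \<noteq> c)))"

definition strong_embedding ::
  "'a set \<Rightarrow> 'a set set \<Rightarrow> 'b set \<Rightarrow> 'b set set \<Rightarrow> ('a \<Rightarrow> 'b) \<Rightarrow> bool" where
  "strong_embedding P L P' L' f \<longleftrightarrow>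
     f ` P \<subseteq> P' \<and> inj_on f P \<and>
     (\<forall>p\<in>P. \<forall>q\<in>P. \<forall>r\<in>P. collinear_set L {p, q, r} \<longrightarrow> collinear_set L' {f p, f q, f r}) \<and>
     (\<forall>p\<in>P. \<forall>q\<in>P. \<forall>r\<in>P. \<not> collinear_set L {p, q, r} \<longrightarrow> \<not> collinear_set L' {f p, f q, f r}) \<and>
     (\<forall>X. independent P L X \<longrightarrow> independent P' L' (f ` X))"

definition collineation ::
  "'a set \<Rightarrow> 'a set set \<Rightarrow> 'b set \<Rightarrow> 'b set set \<Rightarrow> ('a \<Rightarrow> 'b) \<Rightarrow> bool" where
  "collineation P L P' L' f \<longleftrightarrow> bij_betw f P P' \<and> (\<lambda>l. f ` l) ` L = L'"

end

theory Submission
  imports Defs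
begin

text \<open>A surjective strong embedding is a collineation, so it suffices that every point p' of the
  target is an image. As G_k(f) is onto, p' lies in the span of f(X) for some independent X of at
  most k + 1 points, and a smallest such X turns out to be a singleton. Indeed, let a, b be two
  points of X, W = X - {a, b}, and extend X to an independent Y of k + 2 points. If p' is not
  already spanned by f(W), then p' and f(Y - {a, b}) are k + 1 independent points, so their span
  is the span of f(B) for a k-dimensional subspace S = span B, a hyperplane of span Y containing
  Y - {a, b}. The line ab meets S in a point u, because the source is projective, and p' is
  spanned by f(W) and f(u): otherwise p', f(W) and f(u) would be |X| independent points spanning
  the span of f(X), so f(X) would lie in the span of f(B), i.e. X and hence Y would lie in S,
  which has too small a dimension.\<close>

section \<open>Linear spaces\<close>

locale lin_space =
  fixes P :: "'a set" and L :: "'a set set"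
  assumes linear_space: "linear_space P L"
begin

lemma ex1_line:
  assumes "p \<in> P" "q \<in> P" "p \<noteq> q" shows "\<exists>!l. l \<in> L \<and> p \<in> l \<and> q \<in> l"
proof -
  have "\<forall>p\<in>P. \<forall>q\<in>P. p \<noteq> q \<longrightarrow> (\<exists>!l. l \<in> L \<and> p \<in> l \<and> q \<in> l)"
    using linear_space unfolding linear_space_def by (rule conjunct2)
  then show ?thesis using assms by simp
qed

lemma line_through_spec:
  assumes "p \<in> P" "q \<in> P" "p \<noteq> q"
  shows "line_through L p q \<in> L" "p \<in> line_through L p q" "q \<in> line_through L p q"
  using theI'[OF ex1_line[OF assms]] unfolding line_through_def by blast+

lemma line_subset_points: "l \<in> L \<Longrightarrow> l \<subseteq> P"
  using linear_space[unfolded linear_space_def, THEN conjunct1] by blast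

lemma line_has_two_points:
  assumes "l \<in> L" obtains p q where "p \<in> l" "q \<in> l" "p \<noteq> q"
  using linear_space[unfolded linear_space_def, THEN conjunct1] assms by blast

lemma line_through_eqI:
  assumes "l \<in> L" "p \<in> l" "q \<in> l" "p \<noteq> q"
  shows "line_through L p q = l"
proof -
  have "p \<in> P" "q \<in> P" using assms line_subset_points by auto
  then have "\<exists>!l. l \<in> L \<and> p \<in> l \<and> q \<in> l"
    using assms(4) by (rule ex1_line)
  then show ?thesis
    unfolding line_through_def by (rule the1_equality) (use assms in blast)
qed

lemma subspaceI:
  "S \<subseteq> P \<Longrightarrow> (\<And>p q. p \<in> S \<Longrightarrow> q \<in> S \<Longrightarrow> p \<noteq> q \<Longrightarrow> line_through L p q \<subseteq> S)
    \<Longrightarrow> subspace P L S"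
  unfolding subspace_def by blast

lemma subspaceD: "subspace P L S \<Longrightarrow> p \<in> S \<Longrightarrow> q \<in> S \<Longrightarrow> p \<noteq> q \<Longrightarrow> line_through L p q \<subseteq> S"
  unfolding subspace_def by blast

lemma subspace_subset_points: "subspace P L S \<Longrightarrow> S \<subseteq> P"
  unfolding subspace_def by blast

lemma subspace_line: "l \<in> L \<Longrightarrow> subspace P L l"
  by (intro subspaceI line_subset_points) (auto simp: line_through_eqI)

lemma subspace_points: "subspace P L P"
  by (intro subspaceI) (auto dest: line_through_spec(1) line_subset_points)

lemma span_superset: "X \<subseteq> span P L X"
  unfolding span_def by blast

lemma span_minimal: "subspace P L S \<Longrightarrow> X \<subseteq> S \<Longrightarrow> span P L X \<subseteq> S"
  unfolding span_def by blast

lemma span_mono: "X \<subseteq> Y \<Longrightarrow> span P L X \<subseteq> span P L Y"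
  unfolding span_def by blast

lemma span_subset_points: "X \<subseteq> P \<Longrightarrow> span P L X \<subseteq> P"
  by (rule span_minimal[OF subspace_points])

lemma subspace_span:
  assumes "X \<subseteq> P" shows "subspace P L (span P L X)"
proof (rule subspaceI)
  show "span P L X \<subseteq> P" using assms by (rule span_subset_points)
next
  fix p q assume "p \<in> span P L X" "q \<in> span P L X" "p \<noteq> q"
  then show "line_through L p q \<subseteq> span P L X"
    unfolding span_def by (blast dest: subspaceD)
qed

lemma span_subspace_eq: "subspace P L S \<Longrightarrow> span P L S = S"
  using span_minimal[of S S] span_superset[of S] by blast

lemma span_subset_spanI: "X \<subseteq> span P L Y \<Longrightarrow> Y \<subseteq> P \<Longrightarrow> span P L X \<subseteq> span P L Y"
  by (rule span_minimal[OF subspace_span])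

lemma span_empty: "span P L {} = {}"
  by (rule span_subspace_eq) (rule subspaceI, auto)

lemma span_singleton: "p \<in> P \<Longrightarrow> span P L {p} = {p}"
  by (rule span_subspace_eq) (rule subspaceI, auto)

lemma span_doubleton:
  assumes "p \<in> P" "q \<in> P" "p \<noteq> q"
  shows "span P L {p, q} = line_through L p q"
proof
  show "span P L {p, q} \<subseteq> line_through L p q"
    using line_through_spec[OF assms] by (intro span_minimal subspace_line) auto
  have "subspace P L (span P L {p, q})" using assms by (intro subspace_span) simp
  then show "line_through L p q \<subseteq> span P L {p, q}"
    using span_superset[of "{p, q}"] assms(3) by (blast dest: subspaceD)
qed

lemma is_dim_card_le:
  "is_dim P L S m \<Longrightarrow> X \<subseteq> P \<Longrightarrow> finite X \<Longrightarrow> span P L X = S \<Longrightarrow> Suc m \<le> card X"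
  unfolding is_dim_def by auto

lemma independent_iff:
  "independent P L X \<longleftrightarrow> X \<subseteq> P \<and> (\<forall>x\<in>X. x \<notin> span P L (X - {x}))"
proof
  assume indep: "independent P L X"
  then have XP: "X \<subseteq> P" unfolding independent_def by blast
  have "x \<notin> span P L (X - {x})" if "x \<in> X" for x
  proof
    assume "x \<in> span P L (X - {x})"
    then have "X \<subseteq> span P L (X - {x})" using span_superset[of "X - {x}"] by blast
    then have "span P L (X - {x}) = span P L X"
      using XP by (intro antisym span_mono span_subset_spanI) auto
    moreover have "X - {x} \<subset> X" using that by blast
    ultimately show False using indep unfolding independent_def by blast
  qed
  with XP show "X \<subseteq> P \<and> (\<forall>x\<in>X. x \<notin> span P L (X - {x}))" by blast
next
  assume "X \<subseteq> P \<and> (\<forall>x\<in>X. x \<notin> span P L (X - {x}))"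
  moreover have "span P L Y \<noteq> span P L X" if "\<forall>x\<in>X. x \<notin> span P L (X - {x})" "Y \<subset> X" for Y
  proof
    assume eq: "span P L Y = span P L X"
    obtain x where "x \<in> X" "x \<notin> Y" using \<open>Y \<subset> X\<close> by blast
    then have "x \<in> span P L (X - {x})"
      using eq span_superset[of X] span_mono[of Y "X - {x}"] \<open>Y \<subset> X\<close> by blast
    with \<open>x \<in> X\<close> that(1) show False by blast
  qed
  ultimately show "independent P L X" unfolding independent_def by blast
qed

lemma independent_subset_points: "independent P L X \<Longrightarrow> X \<subseteq> P"
  unfolding independent_def by blast

lemma independent_notin_span: "independent P L X \<Longrightarrow> x \<in> X \<Longrightarrow> x \<notin> span P L (X - {x})"
  unfolding independent_iff by blast

lemma independent_subset:
  assumes X: "independent P L X" and "Y \<subseteq> X" shows "independent P L Y"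
  unfolding independent_iff
proof (intro conjI ballI)
  show "Y \<subseteq> P" using independent_subset_points[OF X] \<open>Y \<subseteq> X\<close> by blast
  fix y assume "y \<in> Y"
  moreover have "span P L (Y - {y}) \<subseteq> span P L (X - {y})" using \<open>Y \<subseteq> X\<close> by (intro span_mono) blast
  ultimately show "y \<notin> span P L (Y - {y})" using independent_notin_span[OF X] \<open>Y \<subseteq> X\<close> by blast
qed

lemma independent_line_disjoint_span:
  assumes X: "independent P L X" and ab: "a \<in> X" "b \<in> X" "a \<noteq> b"
    and u: "u \<in> line_through L a b"
  shows "u \<notin> span P L (X - {a, b})"
proof
  assume uW: "u \<in> span P L (X - {a, b})"
  have XP: "X \<subseteq> P" using X by (rule independent_subset_points)
  have "span P L (X - {a, b}) \<subseteq> span P L (X - {a})" by (rule span_mono) blast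
  with uW independent_notin_span[OF X ab(1)] have ua: "u \<noteq> a" by blast
  have uP: "u \<in> P" using uW span_subset_points[of "X - {a, b}"] XP by blast
  have "a \<in> P" "b \<in> P" using ab XP by auto
  then have "line_through L a u = line_through L a b"
    using line_through_spec[of a b] line_through_eqI[of "line_through L a b" a u] ab(3) u ua by blast
  then have "b \<in> line_through L a u" using line_through_spec(3)[of a b] \<open>a \<in> P\<close> \<open>b \<in> P\<close> ab(3) by simp
  also have "\<dots> = span P L {a, u}" using span_doubleton[of a u] ab(1) XP uP ua by auto
  also have "\<dots> \<subseteq> span P L (X - {b})"
  proof (rule span_subset_spanI)
    have "span P L (X - {a, b}) \<subseteq> span P L (X - {b})" by (rule span_mono) blast
    then show "{a, u} \<subseteq> span P L (X - {b})"
      using uW ab span_superset[of "X - {b}"] by blast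
  qed (use XP in blast)
  finally show False using independent_notin_span[OF X ab(2)] by blast
qed

lemma is_dim_plane:
  assumes "a \<in> P" "b \<in> P" "c \<in> P" "b \<noteq> c" "a \<notin> line_through L b c"
  shows "is_dim P L (span P L {a, b, c}) 2"
  unfolding is_dim_def
proof (intro conjI allI impI)
  have bc: "line_through L b c \<in> L" "b \<in> line_through L b c" "c \<in> line_through L b c"
    using line_through_spec[OF assms(2-4)] by auto
  then have "a \<noteq> b" "a \<noteq> c" using assms(5) by auto
  then show "\<exists>X. X \<subseteq> P \<and> finite X \<and> card X = 2 + 1 \<and> span P L X = span P L {a, b, c}"
    using assms by (intro exI[of _ "{a, b, c}"]) auto
  show "subspace P L (span P L {a, b, c})" using assms by (intro subspace_span) auto
  fix Y assume Y: "Y \<subseteq> P \<and> finite Y \<and> span P L Y = span P L {a, b, c}"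
  then have abc: "{a, b, c} \<subseteq> span P L Y" using span_superset[of "{a, b, c}"] by simp
  show "2 + 1 \<le> card Y"
  proof (rule ccontr)
    assume "\<not> 2 + 1 \<le> card Y"
    then consider "card Y = 0" | "card Y = 1" | "card Y = 2" by linarith
    then show False
    proof cases
      case 1
      then show False using Y abc span_empty by simp
    next
      case 2
      then obtain y where "Y = {y}" by (rule card_1_singletonE)
      moreover from this have "y \<in> P" using Y by auto
      ultimately have "span P L Y = {y}" using span_singleton by simp
      then show False using abc \<open>a \<noteq> b\<close> by auto
    next
      case 3
      then obtain y z where yz: "Y = {y, z}" "y \<noteq> z" by (meson card_2_iff)
      then have "y \<in> P" "z \<in> P" using Y by auto
      then have "span P L Y = line_through L y z" "line_through L y z \<in> L"
        using span_doubleton[of y z] line_through_spec(1)[of y z] yz by auto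
      then have "line_through L b c = line_through L y z" "a \<in> line_through L y z"
        using line_through_eqI[of "line_through L y z" b c] abc assms(4) by auto
      then show False using assms(5) by simp
    qed
  qed
qed

lemma collinear_iff_on_line:
  assumes "p \<in> P" "q \<in> P" "p \<noteq> q"
  shows "collinear_set L {p, q, r} \<longleftrightarrow> r \<in> line_through L p q"
  using line_through_spec[OF assms] line_through_eqI[of _ p q] assms(3)
  unfolding collinear_set_def by blast

end

section \<open>The exchange axiom\<close>

locale exchange_space = lin_space +
  assumes exchange_axiom: "exchange_axiom P L"
begin

lemma exchange:
  assumes "X \<subseteq> P" "p \<in> P" "p \<notin> span P L X" "q \<in> P" "q \<notin> span P L X"
    and "q \<in> span P L (X \<union> {p})"
  shows "p \<in> span P L (X \<union> {q})"
  using exchange_axiom assms unfolding exchange_axiom_def by blast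

lemma independent_insert:
  assumes X: "independent P L X" and p: "p \<in> P" "p \<notin> span P L X"
  shows "independent P L (insert p X)"
  unfolding independent_iff
proof (intro conjI ballI)
  have XP: "X \<subseteq> P" using X by (rule independent_subset_points)
  then show "insert p X \<subseteq> P" using p by simp
  fix x assume x: "x \<in> insert p X"
  show "x \<notin> span P L (insert p X - {x})"
  proof (cases "x = p")
    case True
    then have "insert p X - {x} = X" using p span_superset[of X] by auto
    then show ?thesis using True p by simp
  next
    case False
    then have xX: "x \<in> X" and eq: "insert p X - {x} = (X - {x}) \<union> {p}" using x by auto
    have x_notin: "x \<notin> span P L (X - {x})" using independent_notin_span[OF X xX] .
    have p_notin: "p \<notin> span P L (X - {x})" using p span_mono[of "X - {x}" X] by blast
    show ?thesis
    proof
      assume "x \<in> span P L (insert p X - {x})"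
      then have "x \<in> span P L ((X - {x}) \<union> {p})" by (simp only: eq)
      moreover have "X - {x} \<subseteq> P" "x \<in> P" using XP xX by auto
      ultimately have "p \<in> span P L ((X - {x}) \<union> {x})"
        using exchange p(1) x_notin p_notin by blast
      moreover have "(X - {x}) \<union> {x} = X" using xX by blast
      ultimately show False using p by simp
    qed
  qed
qed

text \<open>Steinitz exchange: replace the elements of X - Y one at a time by elements of
  Y, keeping X independent.\<close>
lemma independent_card_le_span:
  assumes "finite Y" "Y \<subseteq> P" "finite X" "independent P L X" "X \<subseteq> span P L Y"
  shows "card X \<le> card Y"
  using assms(3-5)
proof (induction "card (X - Y)" arbitrary: X)
  case 0
  then show ?case using assms(1) by (simp add: card_mono)
next
  case (Suc d)
  then obtain x where x: "x \<in> X" "x \<notin> Y"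
    by (metis Diff_eq_empty_iff card.empty nat.distinct(1) subsetI)
  have XP: "X \<subseteq> P" using Suc.prems(2) by (rule independent_subset_points)
  have "\<not> Y \<subseteq> span P L (X - {x})"
  proof
    assume "Y \<subseteq> span P L (X - {x})"
    then have "span P L Y \<subseteq> span P L (X - {x})" using XP by (intro span_subset_spanI) auto
    then show False using Suc.prems x independent_notin_span by blast
  qed
  then obtain y where y: "y \<in> Y" "y \<notin> span P L (X - {x})" by blast
  have yX: "y \<notin> X" using y x span_superset[of "X - {x}"] by blast
  define X' where "X' = insert y (X - {x})"
  have "independent P L X'" unfolding X'_def
    using independent_insert independent_subset[OF Suc.prems(2)] y assms(2) by blast
  moreover have "X' \<subseteq> span P L Y" unfolding X'_def using Suc.prems(3) y span_superset[of Y] by blast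
  moreover have "X' - Y = (X - Y) - {x}" unfolding X'_def using y x by auto
  then have "card (X' - Y) = d" using Suc.hyps(2) x Suc.prems(1) by simp
  moreover have "card X' = card X"
    using card_Suc_Diff1[OF Suc.prems(1) x(1)] yX Suc.prems(1) unfolding X'_def by simp
  ultimately show ?case using Suc.hyps(1)[of X'] Suc.prems(1) unfolding X'_def by simp
qed

lemma is_dim_span_independent:
  assumes "independent P L X" "finite X" "card X = Suc m"
  shows "is_dim P L (span P L X) m"
  unfolding is_dim_def
proof (intro conjI allI impI)
  have XP: "X \<subseteq> P" using assms(1) by (rule independent_subset_points)
  then show "subspace P L (span P L X)" by (rule subspace_span)
  show "\<exists>Y. Y \<subseteq> P \<and> finite Y \<and> card Y = m + 1 \<and> span P L Y = span P L X"
    using XP assms by auto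
  fix Y assume "Y \<subseteq> P \<and> finite Y \<and> span P L Y = span P L X"
  then show "m + 1 \<le> card Y"
    using independent_card_le_span[of Y X] span_superset[of X] assms by auto
qed

lemma obtain_basis:
  assumes "is_dim P L S m"
  obtains X where "independent P L X" "finite X" "card X = Suc m" "span P L X = S"
proof -
  obtain X where X: "X \<subseteq> P" "finite X" "card X = Suc m" "span P L X = S"
    using assms unfolding is_dim_def by auto
  have "x \<notin> span P L (X - {x})" if "x \<in> X" for x
  proof
    assume "x \<in> span P L (X - {x})"
    then have "X \<subseteq> span P L (X - {x})" using span_superset[of "X - {x}"] by blast
    then have "span P L X \<subseteq> span P L (X - {x})" using X(1) by (intro span_subset_spanI) auto
    moreover have "span P L (X - {x}) \<subseteq> span P L X" by (rule span_mono) blast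
    ultimately have "span P L (X - {x}) = S" using X(4) by blast
    then have "Suc m \<le> card (X - {x})" using is_dim_card_le[OF assms, of "X - {x}"] X(1,2) by auto
    then show False using X that by simp
  qed
  then show ?thesis using that X unfolding independent_iff by blast
qed

lemma is_dim_subset_eq:
  assumes A: "is_dim P L A m" and B: "is_dim P L B m" and "A \<subseteq> B"
  shows "A = B"
proof (rule ccontr)
  assume "A \<noteq> B"
  then obtain q where q: "q \<in> B" "q \<notin> A" using \<open>A \<subseteq> B\<close> by blast
  obtain X where X: "independent P L X" "finite X" "card X = Suc m" "span P L X = A"
    using A by (rule obtain_basis)
  obtain Y where Y: "independent P L Y" "finite Y" "card Y = Suc m" "span P L Y = B"
    using B by (rule obtain_basis)
  have YP: "Y \<subseteq> P" using Y(1) by (rule independent_subset_points)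
  have "q \<in> P" using q(1) Y(4) span_subset_points[OF YP] by blast
  moreover have "q \<notin> span P L X" using q(2) X(4) by simp
  ultimately have indep: "independent P L (insert q X)" by (rule independent_insert[OF X(1)])
  have "insert q X \<subseteq> span P L Y" using span_superset[of X] X(4) Y(4) \<open>A \<subseteq> B\<close> q(1) by auto
  then have "card (insert q X) \<le> card Y"
    using independent_card_le_span[OF Y(2) YP _ indep] X(2) by simp
  moreover have "q \<notin> X" using \<open>q \<notin> span P L X\<close> span_superset[of X] by blast
  ultimately show False using X(2,3) Y(3) by simp
qed

lemma span_eq_of_independent:
  assumes "independent P L X" "finite X" "independent P L Y" "finite Y" "card X = card Y"
    and "X \<subseteq> span P L Y"
  shows "span P L X = span P L Y"
proof (cases "Y = {}")
  case True
  then show ?thesis using assms by simp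
next
  case False
  then obtain m where m: "card Y = Suc m" using assms(4) by (metis card_0_eq not0_implies_Suc)
  show ?thesis
    using assms m independent_subset_points[OF assms(3)]
    by (intro is_dim_subset_eq is_dim_span_independent span_subset_spanI) auto
qed

lemma independent_extend:
  assumes dim: "is_dim P L P n" and "independent P L X" "finite X" "card X \<le> m" "m \<le> Suc n"
  obtains Y where "X \<subseteq> Y" "independent P L Y" "finite Y" "card Y = m"
proof -
  have "\<exists>Y. X \<subseteq> Y \<and> independent P L Y \<and> finite Y \<and> card Y = m"
    using assms(2-4)
  proof (induction "m - card X" arbitrary: X)
    case 0
    then show ?case by auto
  next
    case (Suc d)
    have XP: "X \<subseteq> P" using Suc.prems(1) by (rule independent_subset_points)
    have "span P L X \<noteq> P"
      using is_dim_card_le[OF dim XP] Suc.hyps(2) Suc.prems(2) assms(5) by auto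
    then obtain q where q: "q \<in> P" "q \<notin> span P L X" using span_subset_points[OF XP] by blast
    then have "q \<notin> X" using span_superset[of X] by blast
    then have "\<exists>Y. insert q X \<subseteq> Y \<and> independent P L Y \<and> finite Y \<and> card Y = m"
      using Suc independent_insert[OF Suc.prems(1) q] by (intro Suc.hyps(1)) auto
    then show ?case by blast
  qed
  with that show ?thesis by blast
qed

lemma span_modular:
  assumes "finite E" "A \<subseteq> B" "independent P L (B \<union> E)" "B \<inter> E = {}"
  shows "span P L B \<inter> span P L (A \<union> E) \<subseteq> span P L A"
  using assms
proof (induction E rule: finite_induct)
  case empty
  then show ?case by simp
next
  case (insert e E)
  show ?case
  proof
    fix x assume x: "x \<in> span P L B \<inter> span P L (A \<union> insert e E)"
    have BEP: "B \<union> insert e E \<subseteq> P" using insert.prems(2) by (rule independent_subset_points)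
    have "independent P L (B \<union> E)" using insert.prems(2) by (rule independent_subset) blast
    then have IH: "span P L B \<inter> span P L (A \<union> E) \<subseteq> span P L A"
      using insert.IH insert.prems(1,3) by blast
    show "x \<in> span P L A"
    proof (cases "x \<in> span P L (A \<union> E)")
      case True
      then show ?thesis using IH x by blast
    next
      case False
      have "insert e (B \<union> E) - {e} = B \<union> E" using insert.prems(3) insert.hyps(2) by blast
      then have e_notin: "e \<notin> span P L (B \<union> E)"
        using independent_notin_span[OF insert.prems(2), of e] by simp
      moreover have "span P L (A \<union> E) \<subseteq> span P L (B \<union> E)"
        using insert.prems(1) by (intro span_mono) blast
      ultimately have "e \<notin> span P L (A \<union> E)" by blast
      moreover have "A \<union> E \<subseteq> P" "e \<in> P" using BEP insert.prems(1) by auto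
      moreover have "x \<in> P" using x span_subset_points[of B] BEP by blast
      moreover have "x \<in> span P L ((A \<union> E) \<union> {e})" using x by simp
      ultimately have "e \<in> span P L ((A \<union> E) \<union> {x})"
        using exchange[of "A \<union> E" e x] False by blast
      moreover have "span P L ((A \<union> E) \<union> {x}) \<subseteq> span P L (B \<union> E)"
      proof (rule span_subset_spanI)
        have "span P L B \<subseteq> span P L (B \<union> E)" by (rule span_mono) blast
        then show "A \<union> E \<union> {x} \<subseteq> span P L (B \<union> E)"
          using x insert.prems(1) span_superset[of "B \<union> E"] by blast
      qed (use BEP in blast)
      ultimately show ?thesis using e_notin by blast
    qed
  qed
qed

lemma notin_span_diff:
  assumes "independent P L Y" "finite Y" "X \<subseteq> Y" "p \<in> span P L X" "p \<notin> span P L (X - C)"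
  shows "p \<notin> span P L (Y - C)"
proof
  assume "p \<in> span P L (Y - C)"
  moreover have "Y - C = (X - C) \<union> (Y - X - C)" using \<open>X \<subseteq> Y\<close> by blast
  moreover have "independent P L (X \<union> (Y - X - C))"
    using assms(1) by (rule independent_subset) (use \<open>X \<subseteq> Y\<close> in blast)
  then have "span P L X \<inter> span P L ((X - C) \<union> (Y - X - C)) \<subseteq> span P L (X - C)"
    using assms(2) by (intro span_modular) auto
  ultimately show False using assms(4,5) by auto
qed

end

section \<open>Projective spaces\<close>

locale proj_space = lin_space +
  assumes projective_space: "projective_space P L"
begin

lemma coplanar_lines_meet:
  assumes "is_dim P L S 2" "l \<in> L" "m \<in> L" "l \<subseteq> S" "m \<subseteq> S"
  obtains x where "x \<in> l" "x \<in> m"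
  using projective_space assms unfolding projective_space_def by blast

definition join :: "'a set \<Rightarrow> 'a \<Rightarrow> 'a set" where
  "join H a = insert a (H \<union> (\<Union>h\<in>H. line_through L a h))"

lemma line_subset_join: "h \<in> H \<Longrightarrow> line_through L a h \<subseteq> join H a"
  unfolding join_def by blast

lemma join_subset_points:
  assumes "subspace P L H" "a \<in> P" "a \<notin> H"
  shows "join H a \<subseteq> P"
  using assms subspace_subset_points line_through_spec(1) line_subset_points
  unfolding join_def by fastforce

lemma join_point_on_line:
  assumes H: "subspace P L H" and a: "a \<in> P" "a \<notin> H" and "H \<noteq> {}" "x \<in> join H a"
  obtains h where "h \<in> H" "x \<in> line_through L a h"
proof -
  have HP: "H \<subseteq> P" using H by (rule subspace_subset_points)
  obtain h0 where "h0 \<in> H" using \<open>H \<noteq> {}\<close> by blast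
  consider "x = a" | "x \<in> H" | "\<exists>h\<in>H. x \<in> line_through L a h"
    using \<open>x \<in> join H a\<close> unfolding join_def by blast
  then show ?thesis
  proof cases
    case 1
    then show ?thesis using that \<open>h0 \<in> H\<close> line_through_spec(2)[of a h0] a HP by blast
  next
    case 2
    then show ?thesis using that line_through_spec(3)[of a x] a HP by blast
  qed (use that in blast)
qed

text \<open>This is where the projective axiom enters: inside the plane spanned by a, h1, h2 the line
  through a and w meets the line through h1 and h2, which lies in H.\<close>
lemma plane_subset_join:
  assumes H: "subspace P L H" and a: "a \<in> P" "a \<notin> H" and h: "h1 \<in> H" "h2 \<in> H" "h1 \<noteq> h2"
  shows "span P L {a, h1, h2} \<subseteq> join H a"
proof
  fix w assume w: "w \<in> span P L {a, h1, h2}"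
  show "w \<in> join H a"
  proof (cases "w = a")
    case True
    then show ?thesis unfolding join_def by simp
  next
    case False
    have h12: "h1 \<in> P" "h2 \<in> P" using h subspace_subset_points[OF H] by auto
    have lh: "line_through L h1 h2 \<subseteq> H" using subspaceD[OF H h] .
    have plane: "is_dim P L (span P L {a, h1, h2}) 2"
      using is_dim_plane[OF a(1) h12 h(3)] lh a(2) by blast
    have sub: "subspace P L (span P L {a, h1, h2})" using a h12 by (intro subspace_span) auto
    have abc: "{a, h1, h2} \<subseteq> span P L {a, h1, h2}" by (rule span_superset)
    have wP: "w \<in> P" using w span_subset_points[of "{a, h1, h2}"] a h12 by blast
    note aw = line_through_spec[OF a(1) wP False[symmetric]]
    obtain g where g: "g \<in> line_through L a w" "g \<in> line_through L h1 h2"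
    proof (rule coplanar_lines_meet[OF plane aw(1) line_through_spec(1)[OF h12 h(3)]])
      show "line_through L a w \<subseteq> span P L {a, h1, h2}"
        using subspaceD[OF sub, of a w] abc w False by simp
      show "line_through L h1 h2 \<subseteq> span P L {a, h1, h2}"
        using subspaceD[OF sub, of h1 h2] abc h(3) by simp
    qed
    then have "g \<in> H" "g \<noteq> a" using lh a(2) by auto
    moreover have "line_through L a g = line_through L a w"
      using line_through_eqI[OF aw(1,2) g(1)] \<open>g \<noteq> a\<close> by simp
    ultimately show ?thesis using aw(3) line_subset_join[of g H a] by auto
  qed
qed

lemma subspace_join:
  assumes H: "subspace P L H" and a: "a \<in> P" "a \<notin> H"
  shows "subspace P L (join H a)"
proof (rule subspaceI)
  show "join H a \<subseteq> P" using assms by (rule join_subset_points)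
  have HP: "H \<subseteq> P" using H by (rule subspace_subset_points)
  fix x y assume xy: "x \<in> join H a" "y \<in> join H a" "x \<noteq> y"
  show "line_through L x y \<subseteq> join H a"
  proof (cases "H = {}")
    case True
    then show ?thesis using xy unfolding join_def by simp
  next
    case False
    obtain hx where hx: "hx \<in> H" "x \<in> line_through L a hx"
      using join_point_on_line[OF H a False xy(1)] .
    obtain hy where hy: "hy \<in> H" "y \<in> line_through L a hy"
      using join_point_on_line[OF H a False xy(2)] .
    have "hx \<in> P" "hy \<in> P" "hx \<noteq> a" "hy \<noteq> a" using hx hy a HP by auto
    show ?thesis
    proof (cases "hx = hy")
      case True
      then have "line_through L x y = line_through L a hx"
        using line_through_eqI line_through_spec(1)[of a hx] a hx hy xy(3) \<open>hx \<in> P\<close> \<open>hx \<noteq> a\<close>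
        by auto
      then show ?thesis using line_subset_join[OF hx(1)] by simp
    next
      case False
      let ?S = "span P L {a, hx, hy}"
      have sub: "subspace P L ?S" using a \<open>hx \<in> P\<close> \<open>hy \<in> P\<close> by (intro subspace_span) auto
      have "line_through L a hx = span P L {a, hx}" "line_through L a hy = span P L {a, hy}"
        using span_doubleton a(1) \<open>hx \<in> P\<close> \<open>hy \<in> P\<close> \<open>hx \<noteq> a\<close> \<open>hy \<noteq> a\<close> by auto
      moreover have "span P L {a, hx} \<subseteq> ?S" "span P L {a, hy} \<subseteq> ?S" by (rule span_mono, blast)+
      ultimately have "x \<in> ?S" "y \<in> ?S" using hx hy by auto
      then have "line_through L x y \<subseteq> ?S" using subspaceD[OF sub] xy(3) by blast
      then show ?thesis using plane_subset_join[OF H a hx(1) hy(1) False] by blast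
    qed
  qed
qed

lemma span_insert_subset_join:
  assumes "subspace P L H" "a \<in> P" "a \<notin> H"
  shows "span P L (insert a H) \<subseteq> join H a"
  using assms by (intro span_minimal subspace_join) (auto simp: join_def)

lemma exchange_axiom_proj: "exchange_axiom P L"
  unfolding exchange_axiom_def
proof (intro allI impI, elim conjE)
  fix X p q assume X: "X \<subseteq> P" and p: "p \<in> P - span P L X" and q: "q \<in> P - span P L X"
    and q_in: "q \<in> span P L (X \<union> {p})"
  let ?H = "span P L X"
  have H: "subspace P L ?H" using X by (rule subspace_span)
  have "span P L (X \<union> {p}) \<subseteq> span P L (insert p ?H)"
    using span_superset[of X] by (intro span_mono) blast
  then have "q \<in> join ?H p" using span_insert_subset_join[OF H] p q_in by blast
  then consider "q = p" | "q \<in> ?H" | h where "h \<in> ?H" "q \<in> line_through L p h"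
    unfolding join_def by blast
  then show "p \<in> span P L (X \<union> {q})"
  proof cases
    case 1
    then show ?thesis using span_superset[of "X \<union> {q}"] by blast
  next
    case 2
    then show ?thesis using q by blast
  next
    case (3 h)
    have "h \<in> P" "h \<noteq> p" "h \<noteq> q" using 3 p q span_subset_points[OF X] by auto
    then have l: "line_through L p h \<in> L" "p \<in> line_through L p h" "h \<in> line_through L p h"
      using line_through_spec[of p h] p by auto
    have "line_through L q h = line_through L p h"
      using line_through_eqI[OF l(1) 3(2) l(3)] \<open>h \<noteq> q\<close> by simp
    then have "p \<in> span P L {q, h}" using span_doubleton[of q h] l(2) q \<open>h \<in> P\<close> \<open>h \<noteq> q\<close> by auto
    moreover have "span P L {q, h} \<subseteq> span P L (X \<union> {q})"
      using 3(1) span_mono[of X "X \<union> {q}"] span_superset[of "X \<union> {q}"] X q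
      by (intro span_subset_spanI) auto
    ultimately show ?thesis by blast
  qed
qed

end

sublocale proj_space \<subseteq> exchange_space
  by unfold_locales (rule exchange_axiom_proj)

context proj_space
begin

lemma line_meets_hyperplane:
  assumes H: "is_dim P L H m" and U: "is_dim P L U (Suc m)" and "H \<subseteq> U"
    and ab: "a \<in> U" "b \<in> U" "a \<noteq> b"
  obtains h where "h \<in> H" "h \<in> line_through L a b"
proof -
  have subU: "subspace P L U" using U unfolding is_dim_def by blast
  then have "U \<subseteq> P" by (rule subspace_subset_points)
  then have aP: "a \<in> P" and bP: "b \<in> P" using ab by auto
  note ab_line = line_through_spec[OF aP bP ab(3)]
  show ?thesis
  proof (cases "a \<in> H")
    case True
    with that ab_line(2) show ?thesis by blast
  next
    case False
    obtain B where B: "independent P L B" "finite B" "card B = Suc m" "span P L B = H"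
      using H by (rule obtain_basis)
    have "independent P L (insert a B)" using independent_insert[OF B(1) aP] False B(4) by blast
    moreover have "a \<notin> B" using False B(4) span_superset[of B] by blast
    ultimately have "is_dim P L (span P L (insert a B)) (Suc m)"
      using B by (intro is_dim_span_independent) auto
    moreover have "span P L (insert a B) \<subseteq> U"
      using B(4) span_superset[of B] \<open>H \<subseteq> U\<close> ab(1) by (intro span_minimal[OF subU]) auto
    ultimately have "U = span P L (insert a B)" using is_dim_subset_eq[OF _ U] by blast
    also have "\<dots> \<subseteq> span P L (insert a H)" using B(4) span_superset[of B] by (intro span_mono) blast
    also have "\<dots> \<subseteq> join H a"
      using span_insert_subset_join[OF _ aP False] H unfolding is_dim_def by blast
    finally have "b \<in> join H a" using ab(2) by blast
    then consider "b \<in> H" | h where "h \<in> H" "b \<in> line_through L a h"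
      using ab(3) unfolding join_def by blast
    then show ?thesis
    proof cases
      case 1
      with that ab_line(3) show ?thesis by blast
    next
      case (2 h)
      have "h \<in> P" "h \<noteq> a" using 2(1) False \<open>H \<subseteq> U\<close> \<open>U \<subseteq> P\<close> by auto
      note ah_line = line_through_spec[OF aP this(1) this(2)[symmetric]]
      have "line_through L a b = line_through L a h"
        using line_through_eqI[OF ah_line(1,2) 2(2) ab(3)] .
      with that 2(1) ah_line(3) show ?thesis by simp
    qed
  qed
qed

end

section \<open>Strong embeddings\<close>

locale strong_emb = source: lin_space P L + target: lin_space P' L'
  for P :: "'a set" and L and P' :: "'b set" and L' +
  fixes f :: "'a \<Rightarrow> 'b"
  assumes strong_embedding: "strong_embedding P L P' L' f"
begin

lemma image_points: "f ` P \<subseteq> P'"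
  using strong_embedding unfolding strong_embedding_def by blast

lemma inj_on_points: "inj_on f P"
  using strong_embedding unfolding strong_embedding_def by blast

lemma independent_image: "independent P L X \<Longrightarrow> independent P' L' (f ` X)"
  using strong_embedding unfolding strong_embedding_def by blast

lemma image_on_line_iff:
  assumes "p \<in> P" "q \<in> P" "r \<in> P" "p \<noteq> q"
  shows "f r \<in> line_through L' (f p) (f q) \<longleftrightarrow> r \<in> line_through L p q"
proof -
  have "f p \<in> P'" "f q \<in> P'" "f p \<noteq> f q"
    using assms image_points inj_on_points unfolding inj_on_def by auto
  then have "f r \<in> line_through L' (f p) (f q) \<longleftrightarrow> collinear_set L' {f p, f q, f r}"
    by (simp add: target.collinear_iff_on_line)
  also have "\<dots> \<longleftrightarrow> collinear_set L {p, q, r}"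
    using strong_embedding assms(1-3) unfolding strong_embedding_def by blast
  also have "\<dots> \<longleftrightarrow> r \<in> line_through L p q"
    using assms by (simp add: source.collinear_iff_on_line)
  finally show ?thesis .
qed

lemma image_line:
  assumes "p \<in> P" "q \<in> P" "p \<noteq> q"
  shows "f ` line_through L p q \<subseteq> line_through L' (f p) (f q)"
  using image_on_line_iff[OF assms(1,2) _ assms(3)]
    source.line_subset_points[OF source.line_through_spec(1)[OF assms]] by blast

lemma image_span_subset:
  assumes "X \<subseteq> P" shows "f ` span P L X \<subseteq> span P' L' (f ` X)"
proof -
  let ?S = "{x \<in> P. f x \<in> span P' L' (f ` X)}"
  have sub': "subspace P' L' (span P' L' (f ` X))"
    using assms image_points by (intro target.subspace_span) blast
  have "subspace P L ?S"
  proof (rule source.subspaceI)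
    fix p q assume "p \<in> ?S" "q \<in> ?S" "p \<noteq> q"
    moreover from this have "f p \<noteq> f q" using inj_on_points unfolding inj_on_def by blast
    ultimately have "line_through L' (f p) (f q) \<subseteq> span P' L' (f ` X)"
      using target.subspaceD[OF sub'] by blast
    then show "line_through L p q \<subseteq> ?S"
      using image_line[of p q] source.line_subset_points[OF source.line_through_spec(1)[of p q]]
        \<open>p \<in> ?S\<close> \<open>q \<in> ?S\<close> \<open>p \<noteq> q\<close> by blast
  qed blast
  moreover have "X \<subseteq> ?S" using assms target.span_superset[of "f ` X"] by blast
  ultimately show ?thesis using source.span_minimal by blast
qed

lemma span_image_span:
  assumes "X \<subseteq> P" shows "span P' L' (f ` span P L X) = span P' L' (f ` X)"
proof
  show "span P' L' (f ` span P L X) \<subseteq> span P' L' (f ` X)"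
    using assms image_points image_span_subset[OF assms] by (intro target.span_subset_spanI) blast+
  show "span P' L' (f ` X) \<subseteq> span P' L' (f ` span P L X)"
    using source.span_superset[of X] by (intro target.span_mono) blast
qed

lemma collineation_if_surj:
  assumes surj: "f ` P = P'"
  shows "collineation P L P' L' f"
  unfolding collineation_def
proof
  show "bij_betw f P P'" using inj_on_points surj by (simp add: bij_betw_def)
  have image_distinct: "f p \<noteq> f q" if "p \<in> P" "q \<in> P" "p \<noteq> q" for p q
    using inj_on_contraD[OF inj_on_points] that by blast
  have line_image: "f ` line_through L p q = line_through L' (f p) (f q)"
    if "p \<in> P" "q \<in> P" "p \<noteq> q" for p q
  proof
    show "f ` line_through L p q \<subseteq> line_through L' (f p) (f q)" using that by (rule image_line)
    have "f p \<in> P'" "f q \<in> P'" using that image_points by auto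
    then have "line_through L' (f p) (f q) \<subseteq> f ` P"
      using target.line_subset_points[OF target.line_through_spec(1)] image_distinct[OF that] surj
      by blast
    then show "line_through L' (f p) (f q) \<subseteq> f ` line_through L p q"
      using image_on_line_iff[OF that(1,2) _ that(3)] by blast
  qed
  show "(\<lambda>l. f ` l) ` L = L'"
  proof (intro equalityI subsetI)
    fix l' assume "l' \<in> (\<lambda>l. f ` l) ` L"
    then obtain l where l: "l \<in> L" "l' = f ` l" by blast
    obtain p q where pq: "p \<in> l" "q \<in> l" "p \<noteq> q" using l(1) by (rule source.line_has_two_points)
    moreover have "l \<subseteq> P" using l(1) by (rule source.line_subset_points)
    ultimately have "p \<in> P" "q \<in> P" by auto
    have "l' = line_through L' (f p) (f q)"
      using l(2) line_image[OF \<open>p \<in> P\<close> \<open>q \<in> P\<close> pq(3)] source.line_through_eqI[OF l(1) pq] by simp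
    then show "l' \<in> L'"
      using target.line_through_spec(1) image_points image_distinct \<open>p \<in> P\<close> \<open>q \<in> P\<close> pq(3) by blast
  next
    fix l' assume l': "l' \<in> L'"
    obtain p' q' where "p' \<in> l'" "q' \<in> l'" "p' \<noteq> q'" using l' by (rule target.line_has_two_points)
    moreover have "l' \<subseteq> f ` P" using target.line_subset_points[OF l'] surj by blast
    ultimately obtain p q where pq: "p \<in> P" "q \<in> P" "p \<noteq> q" "f p \<in> l'" "f q \<in> l'" by blast
    then have "f ` line_through L p q = l'"
      using line_image[OF pq(1-3)] target.line_through_eqI[OF l' pq(4,5) image_distinct[OF pq(1-3)]]
      by simp
    then show "l' \<in> (\<lambda>l. f ` l) ` L"
      using source.line_through_spec(1)[OF pq(1-3)] by blast
  qed
qed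

end

section \<open>Bijective Grassmann maps\<close>

locale grassmann_embedding = strong_emb P L P' L' f + source: proj_space P L + target: exchange_space P' L'
  for P :: "'a set" and L and P' :: "'b set" and L' and f +
  fixes n k :: nat
  assumes dim_source: "is_dim P L P n" and dim_target: "is_dim P' L' P' n" and k_less_n: "k < n"
    and grassmann_bij: "bij_betw (\<lambda>S. span P' L' (f ` S)) (Grass P L k) (Grass P' L' k)"
begin

lemma in_span_image_iff:
  assumes B: "independent P L B" and "z \<in> P"
  shows "f z \<in> span P' L' (f ` B) \<longleftrightarrow> z \<in> span P L B"
proof
  have BP: "B \<subseteq> P" using B by (rule source.independent_subset_points)
  show "z \<in> span P L B \<Longrightarrow> f z \<in> span P' L' (f ` B)" using image_span_subset[OF BP] by blast
  assume fz: "f z \<in> span P' L' (f ` B)"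
  show "z \<in> span P L B"
  proof (rule ccontr)
    assume "z \<notin> span P L B"
    then have "independent P' L' (f ` insert z B)"
      using independent_image source.independent_insert[OF B \<open>z \<in> P\<close>] by blast
    moreover have "f z \<notin> f ` B"
      using \<open>z \<notin> span P L B\<close> source.span_superset[of B] inj_on_points BP \<open>z \<in> P\<close>
      unfolding inj_on_def by blast
    ultimately have "f z \<notin> span P' L' (f ` B)"
      using target.independent_notin_span[of "f ` insert z B" "f z"] by simp
    with fz show False by contradiction
  qed
qed

lemma span_image_subset_iff:
  assumes "independent P L B" "X \<subseteq> P"
  shows "span P' L' (f ` X) \<subseteq> span P' L' (f ` B) \<longleftrightarrow> X \<subseteq> span P L B"
proof
  show "span P' L' (f ` X) \<subseteq> span P' L' (f ` B) \<Longrightarrow> X \<subseteq> span P L B"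
    using in_span_image_iff[OF assms(1)] target.span_superset[of "f ` X"] assms(2) by blast
  have BP: "B \<subseteq> P" using assms(1) by (rule source.independent_subset_points)
  assume "X \<subseteq> span P L B"
  then have "f ` X \<subseteq> span P' L' (f ` B)" using image_span_subset[OF BP] by blast
  moreover have "f ` B \<subseteq> P'" using BP image_points by blast
  ultimately show "span P' L' (f ` X) \<subseteq> span P' L' (f ` B)" by (rule target.span_subset_spanI)
qed

lemma grassmann_preimage:
  assumes "independent P' L' D" "finite D" "card D = Suc k"
  obtains B where "independent P L B" "finite B" "card B = Suc k"
    "span P' L' (f ` B) = span P' L' D"
proof -
  have "span P' L' D \<in> Grass P' L' k"
    using target.is_dim_span_independent[OF assms] unfolding Grass_def by simp
  moreover have "(\<lambda>S. span P' L' (f ` S)) ` Grass P L k = Grass P' L' k"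
    using grassmann_bij by (rule bij_betw_imp_surj_on)
  ultimately have "span P' L' D \<in> (\<lambda>S. span P' L' (f ` S)) ` Grass P L k" by simp
  then obtain S where S: "span P' L' D = span P' L' (f ` S)" "S \<in> Grass P L k" by (rule imageE)
  obtain B where B: "independent P L B" "finite B" "card B = Suc k" "span P L B = S"
    using S(2) unfolding Grass_def by (auto elim: source.obtain_basis)
  have "span P' L' (f ` B) = span P' L' D"
    using span_image_span[OF source.independent_subset_points[OF B(1)]] B(4) S(1) by simp
  with B(1-3) that show ?thesis by blast
qed

lemma point_in_span_image:
  assumes "p' \<in> P'"
  obtains X where "independent P L X" "finite X" "card X \<le> Suc k" "p' \<in> span P' L' (f ` X)"
proof -
  have "independent P' L' {p'}"
    using assms target.span_empty unfolding target.independent_iff by simp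
  then obtain D where "{p'} \<subseteq> D" "independent P' L' D" "finite D" "card D = Suc k"
    using target.independent_extend[OF dim_target, of "{p'}" "Suc k"] k_less_n by auto
  moreover obtain X where "independent P L X" "finite X" "card X = Suc k"
      "span P' L' (f ` X) = span P' L' D"
    using grassmann_preimage[OF calculation(2-4)] .
  ultimately show ?thesis using that target.span_superset[of D] by auto
qed

lemma span_image_insert_eq:
  assumes X: "independent P L X" "finite X" and Q: "independent P L Q" "finite Q"
    and "card X = Suc (card Q)" "Q \<subseteq> span P L X"
    and p': "p' \<in> P'" "p' \<in> span P' L' (f ` X)" "p' \<notin> span P' L' (f ` Q)"
  shows "span P' L' (insert p' (f ` Q)) = span P' L' (f ` X)"
proof (rule target.span_eq_of_independent)
  have XP: "X \<subseteq> P" and QP: "Q \<subseteq> P" using X(1) Q(1) source.independent_subset_points by auto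
  show "independent P' L' (insert p' (f ` Q))"
    using target.independent_insert[OF independent_image[OF Q(1)] p'(1,3)] .
  show "independent P' L' (f ` X)" using X(1) by (rule independent_image)
  have "p' \<notin> f ` Q" using p'(3) target.span_superset[of "f ` Q"] by blast
  then show "card (insert p' (f ` Q)) = card (f ` X)"
    using assms card_image[OF inj_on_subset[OF inj_on_points QP]]
      card_image[OF inj_on_subset[OF inj_on_points XP]] by simp
  show "insert p' (f ` Q) \<subseteq> span P' L' (f ` X)"
    using p'(2) \<open>Q \<subseteq> span P L X\<close> image_span_subset[OF XP] by blast
qed (use X Q in auto)

lemma notin_span_image_diff:
  assumes Y: "independent P L Y" "finite Y" "X \<subseteq> Y" "C \<subseteq> X"
    and "p' \<in> span P' L' (f ` X)" "p' \<notin> span P' L' (f ` (X - C))"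
  shows "p' \<notin> span P' L' (f ` (Y - C))"
proof -
  have YP: "Y \<subseteq> P" using Y(1) by (rule source.independent_subset_points)
  have "f ` (X - C) = f ` X - f ` C" "f ` (Y - C) = f ` Y - f ` C"
    by (rule inj_on_image_set_diff[OF inj_on_points]; use YP Y(3,4) in blast)+
  moreover have "p' \<notin> span P' L' (f ` Y - f ` C)" if "p' \<notin> span P' L' (f ` X - f ` C)"
    using target.notin_span_diff[OF independent_image[OF Y(1)] _ _ assms(5) that] Y(2,3) by blast
  ultimately show ?thesis using assms(6) by simp
qed

lemma hyperplane_preimage:
  assumes X: "independent P L X" "finite X" "card X \<le> Suc k" and ab: "a \<in> X" "b \<in> X" "a \<noteq> b"
    and p': "p' \<in> P'" "p' \<in> span P' L' (f ` X)" "p' \<notin> span P' L' (f ` (X - {a, b}))"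
  obtains Y B where "X \<subseteq> Y" "independent P L Y" "finite Y" "card Y = Suc (Suc k)"
    "independent P L B" "finite B" "card B = Suc k"
    "Y - {a, b} \<subseteq> span P L B" "span P L B \<subseteq> span P L Y" "p' \<in> span P' L' (f ` B)"
proof -
  obtain Y where Y: "X \<subseteq> Y" "independent P L Y" "finite Y" "card Y = Suc (Suc k)"
    using source.independent_extend[OF dim_source X(1,2), where m = "Suc (Suc k)"] X(3) k_less_n
    by auto
  have YP: "Y \<subseteq> P" using Y(2) by (rule source.independent_subset_points)
  have "a \<in> Y" "b \<in> Y" using ab Y(1) by auto
  let ?D = "insert p' (f ` (Y - {a, b}))"
  have p'_notin: "p' \<notin> span P' L' (f ` (Y - {a, b}))"
    using notin_span_image_diff[OF Y(2,3,1) _ p'(2,3)] ab by blast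
  have "independent P L (Y - {a, b})" using Y(2) by (rule source.independent_subset) blast
  then have "independent P' L' ?D"
    using target.independent_insert independent_image p'(1) p'_notin by blast
  moreover have "card ?D = Suc k"
  proof -
    have "card (f ` (Y - {a, b})) = k"
      using card_image[OF inj_on_subset[OF inj_on_points, of "Y - {a, b}"]] YP Y(3,4)
        \<open>a \<in> Y\<close> \<open>b \<in> Y\<close> ab(3) by auto
    moreover have "p' \<notin> f ` (Y - {a, b})"
      using p'_notin target.span_superset[of "f ` (Y - {a, b})"] by blast
    ultimately show ?thesis using Y(3) by simp
  qed
  ultimately obtain B where B: "independent P L B" "finite B" "card B = Suc k"
      "span P' L' (f ` B) = span P' L' ?D"
    using grassmann_preimage Y(3) by blast
  have "Y - {a, b} \<subseteq> span P L B"
    using in_span_image_iff[OF B(1)] B(4) target.span_superset[of ?D] YP by blast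
  moreover have "?D \<subseteq> span P' L' (f ` Y)"
    using p'(2) target.span_mono[of "f ` X" "f ` Y"] Y(1) target.span_superset[of "f ` Y"] by blast
  then have "span P' L' (f ` B) \<subseteq> span P' L' (f ` Y)"
    unfolding B(4) using YP image_points by (intro target.span_subset_spanI) auto
  then have "span P L B \<subseteq> span P L Y"
    using span_image_subset_iff[OF Y(2) source.independent_subset_points[OF B(1)]]
      source.span_subset_spanI[OF _ YP] by blast
  moreover have "p' \<in> span P' L' (f ` B)" using B(4) target.span_superset[of ?D] by blast
  ultimately show ?thesis using that Y B(1-3) by blast
qed

lemma span_image_shrink:
  assumes p': "p' \<in> P'" and X: "independent P L X" "finite X" "card X \<le> Suc k" "2 \<le> card X"
    and p'_in: "p' \<in> span P' L' (f ` X)"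
  obtains Q where "independent P L Q" "finite Q" "card Q < card X" "p' \<in> span P' L' (f ` Q)"
proof -
  have "\<not> card X \<le> Suc 0" using X(4) by simp
  then obtain a b where ab: "a \<in> X" "b \<in> X" "a \<noteq> b"
    using card_le_Suc0_iff_eq[OF X(2)] by blast
  define W where "W = X - {a, b}"
  have XP: "X \<subseteq> P" using X(1) by (rule source.independent_subset_points)
  have W: "independent P L W" "finite W" "Suc (Suc (card W)) = card X"
    using source.independent_subset[OF X(1)] X(2,4) ab unfolding W_def by auto
  show ?thesis
  proof (cases "p' \<in> span P' L' (f ` W)")
    case True
    then show ?thesis using that W by simp
  next
    case False
    obtain Y B where Y: "X \<subseteq> Y" "independent P L Y" "finite Y" "card Y = Suc (Suc k)"
      and B: "independent P L B" "finite B" "card B = Suc k" "Y - {a, b} \<subseteq> span P L B"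
        "span P L B \<subseteq> span P L Y" "p' \<in> span P' L' (f ` B)"
      using hyperplane_preimage[OF X(1-3) ab p' p'_in False[unfolded W_def]] by blast
    obtain u where u: "u \<in> span P L B" "u \<in> line_through L a b"
    proof (rule source.line_meets_hyperplane)
      show "is_dim P L (span P L B) k" using B(1-3) by (rule source.is_dim_span_independent)
      show "is_dim P L (span P L Y) (Suc k)" using Y(2-4) by (rule source.is_dim_span_independent)
    qed (use B(5) ab Y(1) source.span_superset[of Y] in auto)
    have u_notin: "u \<notin> span P L W"
      unfolding W_def by (rule source.independent_line_disjoint_span[OF X(1) ab u(2)])
    moreover have "u \<in> P"
      using u(1) source.span_subset_points[OF source.independent_subset_points[OF B(1)]] by blast
    ultimately have Q: "independent P L (insert u W)" "finite (insert u W)"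
      using source.independent_insert[OF W(1)] W(2) by auto
    have "u \<notin> W" using u_notin source.span_superset[of W] by blast
    then have card_Q: "card X = Suc (card (insert u W))" using W(2,3) by simp
    have "p' \<in> span P' L' (f ` insert u W)"
    proof (rule ccontr)
      assume "p' \<notin> span P' L' (f ` insert u W)"
      moreover have "insert u W \<subseteq> span P L X"
        using source.span_superset[of X] source.span_doubleton[of a b] source.span_mono[of "{a, b}" X]
          ab XP u(2) unfolding W_def by auto
      ultimately have "span P' L' (f ` X) = span P' L' (insert p' (f ` insert u W))"
        using span_image_insert_eq[OF X(1,2) Q card_Q] p' p'_in by simp
      moreover have "insert u W \<subseteq> span P L B" using u(1) B(4) Y(1) unfolding W_def by blast
      then have "span P' L' (f ` insert u W) \<subseteq> span P' L' (f ` B)"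
        using span_image_subset_iff[OF B(1)] Q(1) source.independent_subset_points by blast
      then have "span P' L' (insert p' (f ` insert u W)) \<subseteq> span P' L' (f ` B)"
        using B(6) target.span_superset[of "f ` insert u W"] image_points
          source.independent_subset_points[OF B(1)] by (intro target.span_subset_spanI) auto
      ultimately have "X \<subseteq> span P L B" using span_image_subset_iff[OF B(1) XP] by simp
      then have "card Y \<le> card B"
        using source.independent_card_le_span[OF B(2) _ Y(3,2)] B(4) ab
          source.independent_subset_points[OF B(1)] by blast
      then show False using Y(4) B(3) by simp
    qed
    then show ?thesis using that Q card_Q by simp
  qed
qed

lemma surj_points: "f ` P = P'"
proof (rule equalityI[OF image_points subsetI])
  fix p' assume p': "p' \<in> P'"
  let ?good = "\<lambda>X. independent P L X \<and> finite X \<and> card X \<le> Suc k \<and> p' \<in> span P' L' (f ` X)"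
  obtain X0 where "?good X0" using point_in_span_image[OF p'] by blast
  then obtain X where X: "?good X" and least: "\<And>Y. ?good Y \<Longrightarrow> card X \<le> card Y"
    using ex_has_least_nat[of ?good X0 card] by blast
  have "\<not> 2 \<le> card X"
  proof
    assume "2 \<le> card X"
    then obtain Q where "independent P L Q" "finite Q" "card Q < card X" "p' \<in> span P' L' (f ` Q)"
      using span_image_shrink[OF p'] X by blast
    then show False using least[of Q] X by simp
  qed
  moreover have "card X \<noteq> 0" using X target.span_empty by auto
  ultimately have "card X = 1" by linarith
  then obtain x where "X = {x}" by (rule card_1_singletonE)
  moreover from this have "x \<in> P" using X source.independent_subset_points by blast
  ultimately show "p' \<in> f ` P" using X target.span_singleton[of "f x"] image_points by auto
qed

end

theorem proposition2p4:
  fixes P :: "'a set" and L :: "'a set set" and P' :: "'b set" and L' :: "'b set set"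
    and f :: "'a \<Rightarrow> 'b" and n k :: nat
  assumes "projective_space P L" and "is_dim P L P n"
    and "linear_space P' L'" and "is_dim P' L' P' n" and "exchange_axiom P' L'"
    and "strong_embedding P L P' L' f"
    and "k < n"
    and "bij_betw (\<lambda>S. span P' L' (f ` S)) (Grass P L k) (Grass P' L' k)"
  shows "collineation P L P' L' f"
proof -
  have "linear_space P L" using assms(1) unfolding projective_space_def by blast
  then interpret grassmann_embedding P L P' L' f n k
    using assms by unfold_locales
  show ?thesis using surj_points by (rule collineation_if_surj)
qed

end
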